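(* Fix $\epsilon>8n^{-1/2}$. There is a hyperplane $\mathbf{H}\subseteq\mathbb{R}^n$ and a set $S\subseteq\{-1,1\}^n$ with $|S|\ge\frac{\epsilon}{8}2^n$ such that both of the following hold: (i) every $x\in S$ has Euclidean distance $d(x,\mathbf{H})\le 2\epsilon n^{-1/2}$; and (ii) there is no hyperplane $\mathbf{H}'$ which passes through all the points in $S$.
   Context: $d(x,\mathbf{H})$ denotes the Euclidean distance from the point $x$ to the hyperplane $\mathbf{H}$; a hyperplane is an affine subspace of $\mathbb{R}^n$ of dimension $n-1$. *)

theory Defs
  imports "HOL-Analysis.Analysis"
begin

definition is_hyperplane :: "(real ^ 'n) set \<Rightarrow> bool" where
  "is_hyperplane H \<longleftrightarrow> affine H \<and> aff_dim H = int CARD('n) - 1"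

definition sign_cube :: "(real ^ 'n) set" where
  "sign_cube = {x. \<forall>i. x $ i = 1 \<or> x $ i = -1}"

end

theory Submission
  imports Defs
begin

text \<open>Single out two coordinates a and b and call the remaining m = n - 2 coordinates
  ordinary. The vector w with entries 1 at a, -1 at b and 2/m elsewhere is orthogonal to the
  sign vector that is -1 exactly off a, and its inner product with the sign vector that is -1
  on a set B of ordinary coordinates (or on B together with a and b) is (2/m)(m - 2|B|).
  Taking all B with |m - 2|B|| at most s, of order \<epsilon> sqrt n, gives points within
  2\<epsilon>/sqrt n of the hyperplane orthogonal to w, and by Chebyshev's inequality and the
  unimodality of binomial coefficients there are at least \<epsilon> 2^n / 8 of them. A hyperplane
  u \<bullet> x = c through all of them has equal u-sums over all sets B of ordinary coordinates
  with |B| close to m/2, which forces u to vanish on the ordinary coordinates; the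
  remaining points then force u = 0.\<close>

section \<open>Binomial coefficients near the centre\<close>

lemma sum_sq_times_binomial: "4 * (\<Sum>k\<le>m. k^2 * (m choose k)) = m * (m + 1) * 2^m"
proof (cases m)
  case 0 then show ?thesis by simp
next
  case (Suc n)
  have "(\<Sum>k\<le>Suc n. k^2 * (Suc n choose k)) = (\<Sum>j\<le>n. Suc j * (Suc j * (Suc n choose Suc j)))"
    unfolding sum.atMost_Suc_shift by (simp only: power2_eq_square mult.assoc)
  also have "\<dots> = Suc n * (\<Sum>j\<le>n. j * (n choose j) + (n choose j))"
    by (simp only: Suc_times_binomial sum_distrib_left) (simp add: algebra_simps)
  also have "\<dots> = Suc n * (n * 2^(n - 1) + 2^n)"
    by (simp add: sum.distrib choose_linear_sum choose_row_sum)
  finally show ?thesis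
    unfolding Suc by (cases n) (simp_all add: algebra_simps)
qed

lemma sum_binomial_times_centred_sq:
  "(\<Sum>k\<le>m. real (m choose k) * (real m - 2 * real k)^2) = real m * 2^m"
proof -
  have lin: "2 * (\<Sum>k\<le>m. real k * real (m choose k)) = real m * 2^m"
  proof -
    have "2 * (\<Sum>k\<le>m. k * (m choose k)) = m * 2^m"
      by (cases m) (simp_all add: choose_linear_sum)
    from arg_cong[OF this, of real] show ?thesis by simp
  qed
  have sq: "4 * (\<Sum>k\<le>m. (real k)^2 * real (m choose k)) = real m * (real m + 1) * 2^m"
    using arg_cong[OF sum_sq_times_binomial[of m], of real] by (simp add: algebra_simps)
  have row: "(\<Sum>k\<le>m. real (m choose k)) = 2^m"
    using arg_cong[OF choose_row_sum[of m], of real] by simp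
  have "(\<Sum>k\<le>m. real (m choose k) * (real m - 2 * real k)^2) =
      (real m)^2 * (\<Sum>k\<le>m. real (m choose k)) - 2 * real m * (2 * (\<Sum>k\<le>m. real k * real (m choose k)))
      + 4 * (\<Sum>k\<le>m. (real k)^2 * real (m choose k))"
    by (simp add: power2_eq_square algebra_simps sum_distrib_left sum_subtractf sum.distrib)
  then show ?thesis
    unfolding lin row using sq by (simp add: power2_eq_square algebra_simps)
qed

lemma binomial_le_if_farther_from_centre:
  assumes "k \<le> m" "j \<le> m" "\<bar>real m - 2 * real k\<bar> \<le> \<bar>real m - 2 * real j\<bar>"
  shows "m choose j \<le> m choose k"
proof -
  define reflect where "reflect = (\<lambda>i. if m \<le> 2 * i then i else m - i)"
  have "m choose i = m choose reflect i" "\<bar>real m - 2 * real i\<bar> = 2 * real (reflect i) - real m"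
    "m div 2 \<le> reflect i" "reflect i \<le> m" if "i \<le> m" for i
    using that binomial_symmetric[OF that] by (auto simp: reflect_def of_nat_diff)
  with assms binomial_antimono[of "reflect k" "reflect j" m] show ?thesis
    by force
qed

lemma finite_nat_interval: "finite {k::nat. lo \<le> real k \<and> real k \<le> hi}"
  by (rule finite_subset[of _ "{..nat \<lceil>hi\<rceil>}"]) (auto simp: le_nat_iff le_ceiling_iff)

lemma card_nat_interval_le:
  assumes "lo \<le> hi"
  shows "real (card {k::nat. lo \<le> real k \<and> real k \<le> hi}) \<le> hi - lo + 1"
proof -
  have "int ` {k::nat. lo \<le> real k \<and> real k \<le> hi} \<subseteq> {\<lceil>lo\<rceil>..\<lfloor>hi\<rfloor>}"
    by (auto simp: ceiling_le_iff le_floor_iff)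
  then have "card (int ` {k::nat. lo \<le> real k \<and> real k \<le> hi}) \<le> card {\<lceil>lo\<rceil>..\<lfloor>hi\<rfloor>}"
    by (intro card_mono) simp_all
  also have "card {\<lceil>lo\<rceil>..\<lfloor>hi\<rfloor>} = nat (\<lfloor>hi\<rfloor> + 1 - \<lceil>lo\<rceil>)"
    by simp
  finally have "card {k::nat. lo \<le> real k \<and> real k \<le> hi} \<le> nat (\<lfloor>hi\<rfloor> + 1 - \<lceil>lo\<rceil>)"
    by (simp add: card_image)
  then have "real (card {k::nat. lo \<le> real k \<and> real k \<le> hi}) \<le> real (nat (\<lfloor>hi\<rfloor> + 1 - \<lceil>lo\<rceil>))"
    by (simp only: of_nat_le_iff)
  moreover have "\<lceil>lo\<rceil> \<le> \<lfloor>hi\<rfloor> + 1"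
    using assms by linarith
  ultimately show ?thesis
    by linarith
qed

lemma card_nat_interval_ge:
  assumes "0 \<le> lo"
  shows "hi - lo - 1 \<le> real (card {k::nat. lo \<le> real k \<and> real k \<le> hi})"
proof -
  have "{\<lceil>lo\<rceil>..\<lfloor>hi\<rfloor>} \<subseteq> int ` {k::nat. lo \<le> real k \<and> real k \<le> hi}"
  proof
    fix i assume "i \<in> {\<lceil>lo\<rceil>..\<lfloor>hi\<rfloor>}"
    then have "i = int (nat i)" "nat i \<in> {k::nat. lo \<le> real k \<and> real k \<le> hi}"
      using assms by (auto simp: ceiling_le_iff le_floor_iff)
    then show "i \<in> int ` {k::nat. lo \<le> real k \<and> real k \<le> hi}"
      by (rule image_eqI)
  qed
  then have "card {\<lceil>lo\<rceil>..\<lfloor>hi\<rfloor>} \<le> card (int ` {k::nat. lo \<le> real k \<and> real k \<le> hi})"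
    by (intro card_mono finite_imageI finite_nat_interval)
  then have "nat (\<lfloor>hi\<rfloor> + 1 - \<lceil>lo\<rceil>) \<le> card {k::nat. lo \<le> real k \<and> real k \<le> hi}"
    by (simp add: card_image)
  then have "real (nat (\<lfloor>hi\<rfloor> + 1 - \<lceil>lo\<rceil>)) \<le> real (card {k::nat. lo \<le> real k \<and> real k \<le> hi})"
    by (simp only: of_nat_le_iff)
  then show ?thesis
    by linarith
qed

lemma card_mult_sum_le_card_mult_sum:
  fixes f :: "'a \<Rightarrow> real"
  assumes "\<And>a b. a \<in> A \<Longrightarrow> b \<in> B \<Longrightarrow> f a \<le> f b"
  shows "real (card B) * sum f A \<le> real (card A) * sum f B"
proof -
  have "real (card B) * sum f A = (\<Sum>a\<in>A. \<Sum>b\<in>B. f a)"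
    by (simp add: sum_distrib_right mult.commute)
  also have "\<dots> \<le> (\<Sum>a\<in>A. \<Sum>b\<in>B. f b)"
    by (intro sum_mono assms)
  also have "\<dots> = real (card A) * sum f B"
    by simp
  finally show ?thesis .
qed

definition centred_window :: "nat \<Rightarrow> real \<Rightarrow> nat set" where
  "centred_window m s = {k. k \<le> m \<and> \<bar>real m - 2 * real k\<bar> \<le> s}"

lemma finite_centred_window [simp]: "finite (centred_window m s)"
  by (rule finite_subset[of _ "{..m}"]) (auto simp: centred_window_def)

lemma centred_window_mono: "s \<le> t \<Longrightarrow> centred_window m s \<subseteq> centred_window m t"
  by (auto simp: centred_window_def)

lemma card_centred_window_le:
  assumes "0 \<le> s"
  shows "real (card (centred_window m s)) \<le> s + 1"
proof -
  have "centred_window m s \<subseteq> {k::nat. (real m - s) / 2 \<le> real k \<and> real k \<le> (real m + s) / 2}"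
    by (auto simp: centred_window_def abs_le_iff)
  then have "card (centred_window m s)
      \<le> card {k::nat. (real m - s) / 2 \<le> real k \<and> real k \<le> (real m + s) / 2}"
    by (intro card_mono finite_nat_interval)
  then show ?thesis
    using card_nat_interval_le[of "(real m - s) / 2" "(real m + s) / 2"] assms
    by (simp add: field_simps)
qed

lemma card_centred_window_ge:
  assumes "s \<le> real m"
  shows "s - 1 \<le> real (card (centred_window m s))"
proof -
  have "centred_window m s = {k::nat. (real m - s) / 2 \<le> real k \<and> real k \<le> (real m + s) / 2}"
    using assms by (auto simp: centred_window_def abs_le_iff)
  then show ?thesis
    using card_nat_interval_ge[of "(real m - s) / 2" "(real m + s) / 2"] assms
    by (simp add: field_simps)
qed

lemma binomial_tail_sum_le:
  assumes "R > 0"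
  shows "(\<Sum>k\<in>{..m} - centred_window m R. real (m choose k)) \<le> real m * 2^m / R^2"
proof -
  let ?dev = "\<lambda>k. real (m choose k) * (real m - 2 * real k)^2 / R^2"
  have "(\<Sum>k\<in>{..m} - centred_window m R. real (m choose k)) \<le> (\<Sum>k\<in>{..m} - centred_window m R. ?dev k)"
  proof (rule sum_mono)
    fix k assume "k \<in> {..m} - centred_window m R"
    then have "R < \<bar>real m - 2 * real k\<bar>"
      by (auto simp: centred_window_def)
    then have "R^2 \<le> (real m - 2 * real k)^2"
      using assms abs_le_square_iff[of R "real m - 2 * real k"] by simp
    then show "real (m choose k) \<le> ?dev k"
      using assms by (simp add: le_divide_eq mult_left_mono)
  qed
  also have "\<dots> \<le> (\<Sum>k\<le>m. ?dev k)"
    by (rule sum_mono2) auto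
  also have "\<dots> = real m * 2^m / R^2"
    by (simp only: sum_divide_distrib[symmetric] sum_binomial_times_centred_sq)
  finally show ?thesis .
qed

lemma binomial_sum_centred_window_two_sqrt_ge:
  "3/4 * 2^m \<le> (\<Sum>k\<in>centred_window m (2 * sqrt (real m)). real (m choose k))"
proof (cases "m = 0")
  case True
  then show ?thesis
    by (simp add: centred_window_def)
next
  case False
  have "centred_window m (2 * sqrt (real m)) \<subseteq> {..m}"
    by (auto simp: centred_window_def)
  then have "2^m = (\<Sum>k\<in>centred_window m (2 * sqrt (real m)). real (m choose k))
      + (\<Sum>k\<in>{..m} - centred_window m (2 * sqrt (real m)). real (m choose k))"
    using arg_cong[OF choose_row_sum[of m], of real]
      sum.subset_diff[of _ "{..m}" "\<lambda>k. real (m choose k)"] by simp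
  moreover have "(\<Sum>k\<in>{..m} - centred_window m (2 * sqrt (real m)). real (m choose k)) \<le> 2^m / 4"
    using binomial_tail_sum_le[of "2 * sqrt (real m)" m] False by (simp add: power_mult_distrib)
  ultimately show ?thesis
    by linarith
qed

text \<open>As the binomial coefficients decrease away from the centre, the window of width s
  carries at least the share (s - 1)/(s + 2 sqrt m) of the mass of the window of width
  2 sqrt m.\<close>
lemma binomial_sum_centred_window_ge:
  assumes "1 \<le> s" "s \<le> real m"
  shows "3/4 * 2^m * ((s - 1) / (s + 2 * sqrt (real m)))
           \<le> (\<Sum>k\<in>centred_window m s. real (m choose k))"
proof -
  define R where "R = 2 * sqrt (real m)"
  define C where "C k = real (m choose k)" for k
  define Ks where "Ks = centred_window m s"
  define KR where "KR = centred_window m R"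
  have "0 \<le> R"
    by (simp add: R_def)
  have C_nonneg: "0 \<le> sum C A" for A
    by (simp add: C_def sum_nonneg)
  have "3/4 * 2^m \<le> sum C KR"
    using binomial_sum_centred_window_two_sqrt_ge[of m] by (simp add: C_def KR_def R_def)
  also have "\<dots> \<le> sum C (KR - Ks) + sum C Ks"
    using sum.subset_diff[of "KR \<inter> Ks" KR C] sum_mono2[of Ks "KR \<inter> Ks" C]
    by (fastforce simp: C_def Ks_def KR_def Diff_Int)
  finally have mass: "3/4 * 2^m \<le> sum C (KR - Ks) + sum C Ks" .
  have "(s - 1) * sum C (KR - Ks) \<le> real (card Ks) * sum C (KR - Ks)"
    using card_centred_window_ge[OF assms(2)] C_nonneg by (intro mult_right_mono) (simp_all add: Ks_def)
  also have "\<dots> \<le> real (card (KR - Ks)) * sum C Ks"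
    by (rule card_mult_sum_le_card_mult_sum)
      (auto simp: C_def Ks_def KR_def centred_window_def intro: binomial_le_if_farther_from_centre)
  also have "\<dots> \<le> (R + 1) * sum C Ks"
    using card_mono[of KR "KR - Ks"] card_centred_window_le[OF \<open>0 \<le> R\<close>, of m] C_nonneg
    by (intro mult_right_mono) (auto simp: KR_def)
  finally have "(s - 1) * sum C (KR - Ks) \<le> (R + 1) * sum C Ks" .
  moreover have "(s - 1) * (3/4 * 2^m) \<le> (s - 1) * (sum C (KR - Ks) + sum C Ks)"
    using mass assms(1) by (intro mult_left_mono) simp_all
  ultimately have "(s - 1) * (3/4 * 2^m) \<le> (s + R) * sum C Ks"
    unfolding ring_distribs by linarith
  moreover have "0 < s + R"
    using assms(1) \<open>0 \<le> R\<close> by linarith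
  ultimately have "(s - 1) * (3/4 * 2^m) / (s + R) \<le> sum C Ks"
    by (simp only: pos_divide_le_eq mult.commute)
  then show ?thesis
    by (simp add: C_def Ks_def R_def mult_ac)
qed

section \<open>Weights with constant sums over the middle layers\<close>

lemma sum_eq_near_layer_imp_zero:
  fixes u :: "'a \<Rightarrow> real"
  assumes "finite T" "B0 \<subseteq> T" "i \<in> T"
    and near: "\<And>B. B \<subseteq> T \<Longrightarrow> \<bar>real (card B) - real (card B0)\<bar> \<le> 1 \<Longrightarrow> sum u B = sum u B0"
  shows "u i = 0"
proof (cases "i \<in> B0")
  case True
  have "finite B0"
    using assms finite_subset by blast
  then have "sum u B0 = u i + sum u (B0 - {i})" "card (B0 - {i}) = card B0 - 1" "card B0 \<ge> 1"
    using True by (auto simp: sum.remove card_gt_0_iff Suc_le_eq)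
  moreover have "sum u (B0 - {i}) = sum u B0"
    using assms calculation(2,3) by (intro near) (auto simp: of_nat_diff)
  ultimately show ?thesis
    by linarith
next
  case False
  have "finite B0"
    using assms finite_subset by blast
  then have "sum u (insert i B0) = u i + sum u B0" "card (insert i B0) = card B0 + 1"
    using False by simp_all
  moreover have "sum u (insert i B0) = sum u B0"
    using assms calculation(2) by (intro near) auto
  ultimately show ?thesis
    by linarith
qed

lemma exists_middle_subset:
  assumes "finite T"
  obtains B where "B \<subseteq> T" "card B \<in> centred_window (card T) 1"
proof -
  obtain B where "B \<subseteq> T" "card B = card T div 2"
    by (meson div_le_dividend obtain_subset_with_card_n)
  moreover have "\<bar>real (card T) - 2 * real (card T div 2)\<bar> \<le> 1"
    by linarith
  ultimately show ?thesis
    using that by (auto simp: centred_window_def)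
qed

lemma sum_eq_on_middle_layers_imp_zero:
  fixes u :: "'a \<Rightarrow> real"
  assumes "finite T" "i \<in> T"
    and middle: "\<And>B. B \<subseteq> T \<Longrightarrow> card B \<in> centred_window (card T) 3 \<Longrightarrow> sum u B = c"
  shows "u i = 0"
proof -
  obtain B0 where "B0 \<subseteq> T" "card B0 \<in> centred_window (card T) 1"
    using exists_middle_subset[OF assms(1)] .
  moreover have "card B \<in> centred_window (card T) 3"
    if "B \<subseteq> T" "\<bar>real (card B) - real (card B0)\<bar> \<le> 1" for B
    using that calculation card_mono[OF assms(1)] by (auto simp: centred_window_def)
  ultimately show ?thesis
    using assms(1,2) middle by (intro sum_eq_near_layer_imp_zero[of T B0]) auto
qed

section \<open>Sign vectors and hyperplanes\<close>

definition sign_vector :: "'n set \<Rightarrow> real^'n" where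
  "sign_vector A = (\<chi> i. if i \<in> A then -1 else 1)"

lemma inj_sign_vector: "inj sign_vector"
proof (rule injI)
  fix A B :: "'n::finite set"
  assume eq: "sign_vector A = sign_vector B"
  have "i \<in> A \<longleftrightarrow> i \<in> B" for i
    using arg_cong[OF eq, of "\<lambda>v. v $ i"] by (simp add: sign_vector_def split: if_splits)
  then show "A = B"
    by blast
qed

lemma sign_vector_in_sign_cube: "sign_vector A \<in> sign_cube"
  by (simp add: sign_vector_def sign_cube_def)

lemma inner_sign_vector: "u \<bullet> sign_vector A = (\<Sum>i\<in>UNIV. u $ i) - 2 * (\<Sum>i\<in>A. u $ i)"
proof -
  have "u \<bullet> sign_vector A = (\<Sum>i\<in>UNIV. u $ i - 2 * (if i \<in> A then u $ i else 0))"
    by (auto simp: inner_vec_def sign_vector_def intro: sum.cong)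
  also have "\<dots> = (\<Sum>i\<in>UNIV. u $ i) - 2 * (\<Sum>i\<in>A. u $ i)"
    using sum.inter_restrict[of UNIV "\<lambda>i. u $ i" A] by (simp add: sum_subtractf sum_distrib_left)
  finally show ?thesis .
qed

lemma infdist_hyperplane_le:
  fixes w x :: "'a::real_inner"
  assumes "w \<noteq> 0"
  shows "infdist x {y. w \<bullet> y = 0} \<le> \<bar>w \<bullet> x\<bar> / norm w"
proof -
  define p where "p = x - ((w \<bullet> x) / (w \<bullet> w)) *\<^sub>R w"
  have "w \<bullet> p = 0"
    using assms by (simp add: p_def inner_diff_right)
  then have "infdist x {y. w \<bullet> y = 0} \<le> dist x p"
    by (intro infdist_le) simp
  also have "dist x p = \<bar>w \<bullet> x\<bar> / norm w"
    using assms by (simp add: p_def dist_norm power2_norm_eq_inner[symmetric] power2_eq_square)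
  finally show ?thesis .
qed

lemma is_hyperplane_iff:
  fixes H :: "(real^'n) set"
  shows "is_hyperplane H \<longleftrightarrow> (\<exists>u c. u \<noteq> 0 \<and> H = {x. u \<bullet> x = c})"
proof
  assume "is_hyperplane H"
  then have "affine H" "aff_dim H = int DIM(real^'n) - 1"
    by (simp_all add: is_hyperplane_def)
  then show "\<exists>u c. u \<noteq> 0 \<and> H = {x. u \<bullet> x = c}"
    using aff_dim_eq_hyperplane[of H] by (simp add: hull_same)
next
  assume "\<exists>u c. u \<noteq> 0 \<and> H = {x. u \<bullet> x = c}"
  then show "is_hyperplane H"
    by (auto simp: is_hyperplane_def affine_hyperplane)
qed

section \<open>The point set\<close>

definition balanced_subsets :: "'a set \<Rightarrow> real \<Rightarrow> 'a set set" where
  "balanced_subsets T s = {B. B \<subseteq> T \<and> card B \<in> centred_window (card T) s}"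

lemma card_balanced_subsets:
  assumes "finite T"
  shows "card (balanced_subsets T s) = (\<Sum>k\<in>centred_window (card T) s. card T choose k)"
proof -
  have "balanced_subsets T s = (\<Union>k\<in>centred_window (card T) s. {B. B \<subseteq> T \<and> card B = k})"
    by (auto simp: balanced_subsets_def)
  also have "card \<dots> = (\<Sum>k\<in>centred_window (card T) s. card {B. B \<subseteq> T \<and> card B = k})"
    using assms by (intro card_UN_disjoint) (auto intro: finite_subset[of _ "Pow T"])
  also have "\<dots> = (\<Sum>k\<in>centred_window (card T) s. card T choose k)"
    using assms by (simp add: n_subsets)
  finally show ?thesis .
qed

definition slab_points :: "'n \<Rightarrow> 'n \<Rightarrow> real \<Rightarrow> (real^'n) set" where
  "slab_points a b s = insert (sign_vector (- {a}))
     (sign_vector ` (balanced_subsets (- {a, b}) s \<union> (\<lambda>B. B \<union> {a, b}) ` balanced_subsets (- {a, b}) s))"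

lemma slab_points_subset_sign_cube: "slab_points a b s \<subseteq> sign_cube"
  by (auto simp: slab_points_def sign_vector_in_sign_cube)

lemma card_slab_points_ge:
  fixes a b :: "'n::finite"
  assumes "a \<noteq> b" "CARD('n) = m + 2"
  shows "2 * (\<Sum>k\<in>centred_window m s. real (m choose k)) \<le> real (card (slab_points a b s))"
proof -
  let ?F = "balanced_subsets (- {a, b}) s"
  have "card (- {a, b}) = m"
    using assms by (simp add: Compl_eq_Diff_UNIV card_Diff_subset)
  then have "2 * (\<Sum>k\<in>centred_window m s. m choose k) = 2 * card ?F"
    by (simp add: card_balanced_subsets)
  also have "\<dots> = card (?F \<union> (\<lambda>B. B \<union> {a, b}) ` ?F)"
  proof -
    have "inj_on (\<lambda>B. B \<union> {a, b}) ?F" "?F \<inter> (\<lambda>B. B \<union> {a, b}) ` ?F = {}"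
      by (auto simp: balanced_subsets_def inj_on_def)
    then show ?thesis
      by (simp add: card_Un_disjoint card_image)
  qed
  also have "\<dots> = card (sign_vector ` (?F \<union> (\<lambda>B. B \<union> {a, b}) ` ?F))"
    by (rule card_image[symmetric]) (rule inj_on_subset[OF inj_sign_vector], simp)
  also have "\<dots> \<le> card (slab_points a b s)"
    unfolding slab_points_def by (rule card_mono) auto
  finally have "real (2 * (\<Sum>k\<in>centred_window m s. m choose k)) \<le> real (card (slab_points a b s))"
    by (simp only: of_nat_le_iff)
  then show ?thesis
    by simp
qed

lemma inner_eq_on_slab_points_imp_zero:
  assumes "a \<noteq> b" "3 \<le> s" and on_hyperplane: "\<forall>x\<in>slab_points a b s. u \<bullet> x = c"
  shows "u = 0"
proof -
  define T where "T = - {a, b}"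
  define level where "level = ((\<Sum>i\<in>UNIV. u $ i) - c) / 2"
  have on_level: "(\<Sum>i\<in>B. u $ i) = level" if "sign_vector B \<in> slab_points a b s" for B
    using that on_hyperplane by (auto simp: level_def inner_sign_vector)
  have balanced_on_level: "(\<Sum>i\<in>B. u $ i) = level" "(\<Sum>i\<in>B \<union> {a, b}. u $ i) = level"
    if "B \<subseteq> T" "card B \<in> centred_window (card T) s" for B
    using that by (auto simp: slab_points_def T_def balanced_subsets_def intro!: on_level)
  have u_T: "u $ i = 0" if "i \<in> T" for i
  proof (rule sum_eq_on_middle_layers_imp_zero[where T = T and u = "\<lambda>i. u $ i" and c = level])
    show "(\<Sum>i\<in>B. u $ i) = level" if "B \<subseteq> T" "card B \<in> centred_window (card T) 3" for B
      using that centred_window_mono[OF assms(2)] balanced_on_level(1) by blast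
  qed (simp_all add: that)
  have sum_T: "(\<Sum>i\<in>B. u $ i) = 0" if "B \<subseteq> T" for B
    using that u_T by (auto intro: sum.neutral)
  obtain B0 where "B0 \<subseteq> T" "card B0 \<in> centred_window (card T) 1"
    using exists_middle_subset[of T] by auto
  then have "card B0 \<in> centred_window (card T) s"
    using centred_window_mono[of 1 s] assms(2) by auto
  then have "level = 0"
    using balanced_on_level(1)[OF \<open>B0 \<subseteq> T\<close>] sum_T[OF \<open>B0 \<subseteq> T\<close>] by simp
  have "B0 \<union> {a, b} = insert a (insert b B0)" "a \<notin> insert b B0" "b \<notin> B0"
    using \<open>B0 \<subseteq> T\<close> assms(1) by (auto simp: T_def)
  then have "u $ a + u $ b = 0"
    using balanced_on_level(2)[OF \<open>B0 \<subseteq> T\<close>] sum_T[OF \<open>B0 \<subseteq> T\<close>] \<open>level = 0\<close>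
      \<open>card B0 \<in> centred_window (card T) s\<close> by (simp add: finite_subset[OF \<open>B0 \<subseteq> T\<close>])
  moreover have "u $ b = 0"
  proof -
    have "- {a} = insert b T" "b \<notin> T"
      using assms(1) by (auto simp: T_def)
    then have "(\<Sum>i\<in>- {a}. u $ i) = u $ b"
      using sum_T[of T] by simp
    then show ?thesis
      using on_level[of "- {a}"] \<open>level = 0\<close> by (simp add: slab_points_def)
  qed
  ultimately have "u $ i = 0" for i
    using u_T[of i] by (cases "i = a \<or> i = b") (auto simp: T_def)
  then show "u = 0"
    by (simp add: vec_eq_iff)
qed

lemma slab_points_not_in_hyperplane:
  assumes "a \<noteq> b" "3 \<le> s" "is_hyperplane H"
  shows "\<not> slab_points a b s \<subseteq> H"
proof
  assume "slab_points a b s \<subseteq> H"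
  moreover obtain u c where "u \<noteq> 0" "H = {x. u \<bullet> x = c}"
    using assms(3) is_hyperplane_iff by blast
  ultimately show False
    using inner_eq_on_slab_points_imp_zero[OF assms(1,2), of u c] by auto
qed

definition slab_normal :: "'n \<Rightarrow> 'n \<Rightarrow> real \<Rightarrow> real^'n" where
  "slab_normal a b \<eta> = (\<chi> i. if i = a then 1 else if i = b then -1 else \<eta>)"

lemma sum_slab_normal:
  assumes "a \<noteq> b"
  shows "(\<Sum>i\<in>C. slab_normal a b \<eta> $ i) =
           (if a \<in> C then 1 else 0) - (if b \<in> C then 1 else 0) + \<eta> * real (card (C - {a, b}))"
proof -
  have "slab_normal a b \<eta> $ i =
      (if i = a then 1 else 0) - (if i = b then 1 else 0) + (if i \<in> - {a, b} then \<eta> else 0)" for i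
    using assms by (simp add: slab_normal_def)
  then have "(\<Sum>i\<in>C. slab_normal a b \<eta> $ i) =
      (\<Sum>i\<in>C. if i = a then 1 else 0) - (\<Sum>i\<in>C. if i = b then 1 else 0)
        + (\<Sum>i\<in>C. if i \<in> - {a, b} then \<eta> else 0)"
    by (simp only: sum.distrib sum_subtractf)
  also have "(\<Sum>i\<in>C. if i \<in> - {a, b} then \<eta> else 0) = (\<Sum>i\<in>C \<inter> - {a, b}. \<eta>)"
    by (rule sum.inter_restrict[symmetric]) simp
  finally show ?thesis
    by (simp add: Diff_eq mult.commute)
qed

lemma inner_slab_normal_slab_points:
  fixes a b :: "'n::finite"
  assumes "a \<noteq> b" "0 \<le> \<eta>" "0 \<le> s" "CARD('n) = m + 2" "\<eta> * real m = 2"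
    and "x \<in> slab_points a b s"
  shows "\<bar>slab_normal a b \<eta> \<bullet> x\<bar> \<le> \<eta> * s"
proof -
  have card_T: "card (- {a, b} :: 'n set) = m"
    using assms(1,4) by (simp add: Compl_eq_Diff_UNIV card_Diff_subset)
  then have total: "(\<Sum>i\<in>UNIV. slab_normal a b \<eta> $ i) = 2"
    using assms(1,5) sum_slab_normal[OF assms(1), of _ UNIV] by (simp add: Compl_eq_Diff_UNIV)
  have inner_B: "slab_normal a b \<eta> \<bullet> sign_vector B = \<eta> * (real m - 2 * real (card B))"
    "slab_normal a b \<eta> \<bullet> sign_vector (B \<union> {a, b}) = \<eta> * (real m - 2 * real (card B))"
    if "B \<subseteq> - {a, b}" for B
  proof -
    have "B - {a, b} = B" "B \<union> {a, b} - {a, b} = B" "a \<notin> B" "b \<notin> B"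
      using that by auto
    then show "slab_normal a b \<eta> \<bullet> sign_vector B = \<eta> * (real m - 2 * real (card B))"
      "slab_normal a b \<eta> \<bullet> sign_vector (B \<union> {a, b}) = \<eta> * (real m - 2 * real (card B))"
      using assms(5) card_T
      by (simp_all add: Compl_eq_Diff_UNIV inner_sign_vector total sum_slab_normal[OF assms(1)]
          algebra_simps)
  qed
  have zero: "slab_normal a b \<eta> \<bullet> sign_vector (- {a}) = 0"
  proof -
    have "- {a} - {a, b} = - {a, b}"
      by auto
    then show ?thesis
      using assms(1,4,5) card_T by (simp add: inner_sign_vector total sum_slab_normal[OF assms(1)])
  qed
  have bound: "\<bar>\<eta> * (real m - 2 * real (card B))\<bar> \<le> \<eta> * s"
    if "card B \<in> centred_window m s" for B
    using that assms(2) by (simp add: centred_window_def abs_mult mult_left_mono)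
  consider "x = sign_vector (- {a})"
    | B where "B \<subseteq> - {a, b}" "card B \<in> centred_window m s"
        "x = sign_vector B \<or> x = sign_vector (B \<union> {a, b})"
    using assms(6) card_T by (auto simp: slab_points_def balanced_subsets_def)
  then show ?thesis
  proof cases
    case 1
    then show ?thesis
      using zero assms(2,3) by simp
  next
    case (2 B)
    then show ?thesis
      using inner_B[OF \<open>B \<subseteq> - {a, b}\<close>] bound[OF \<open>card B \<in> centred_window m s\<close>] by auto
  qed
qed

lemma norm_slab_normal_ge:
  assumes "a \<noteq> b"
  shows "sqrt 2 \<le> norm (slab_normal a b \<eta>)"
proof -
  have "(\<Sum>i\<in>{a, b}. (slab_normal a b \<eta> $ i)^2) \<le> (\<Sum>i\<in>UNIV. (slab_normal a b \<eta> $ i)^2)"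
    by (rule sum_mono2) auto
  then have "2 \<le> slab_normal a b \<eta> \<bullet> slab_normal a b \<eta>"
    using assms by (simp add: inner_vec_def slab_normal_def power2_eq_square)
  then show ?thesis
    by (simp add: norm_eq_sqrt_inner)
qed

lemma slab_points_near_hyperplane:
  fixes a b :: "'n::finite"
  assumes "a \<noteq> b" "0 \<le> s" "CARD('n) = m + 2" "0 < m"
  shows "\<exists>H. is_hyperplane H \<and>
           (\<forall>x\<in>slab_points a b s. infdist x H \<le> sqrt 2 * s / real m)"
proof -
  define \<eta> where "\<eta> = 2 / real m"
  define w where "w = slab_normal a b \<eta>"
  have "\<eta> > 0" "\<eta> * real m = 2"
    using assms(4) unfolding \<eta>_def by simp_all
  have "sqrt 2 \<le> norm w"
    using norm_slab_normal_ge[OF assms(1)] by (simp add: w_def)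
  then have "w \<noteq> 0"
    by auto
  have "infdist x {y. w \<bullet> y = 0} \<le> sqrt 2 * s / real m"
    if "x \<in> slab_points a b s" for x
  proof -
    have "infdist x {y. w \<bullet> y = 0} \<le> \<bar>w \<bullet> x\<bar> / norm w"
      using \<open>w \<noteq> 0\<close> by (rule infdist_hyperplane_le)
    also have "\<dots> \<le> \<eta> * s / sqrt 2"
      using inner_slab_normal_slab_points[OF assms(1) _ assms(2,3) \<open>\<eta> * real m = 2\<close> that]
        \<open>\<eta> > 0\<close> \<open>sqrt 2 \<le> norm w\<close> assms(2)
      by (intro frac_le) (auto simp: w_def)
    also have "\<dots> = sqrt 2 * s / real m"
      using assms(4) by (simp add: \<eta>_def field_simps)
    finally show ?thesis .
  qed
  moreover have "is_hyperplane {y. w \<bullet> y = 0}"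
    using \<open>w \<noteq> 0\<close> is_hyperplane_iff by blast
  ultimately show ?thesis
    by blast
qed

lemma exists_slab_point_set:
  assumes "CARD('n) = m + 2" "3 \<le> s" "s \<le> real m"
  shows "\<exists>(H :: (real^'n) set) S. is_hyperplane H \<and> S \<subseteq> sign_cube \<and>
           3/2 * 2^m * ((s - 1) / (s + 2 * sqrt (real m))) \<le> real (card S) \<and>
           (\<forall>x\<in>S. infdist x H \<le> sqrt 2 * s / real m) \<and>
           \<not> (\<exists>H'. is_hyperplane H' \<and> S \<subseteq> H')"
proof -
  obtain T :: "'n set" where "card T = 2"
    using obtain_subset_with_card_n[of 2 "UNIV :: 'n set"] assms(1) by auto
  then obtain a b :: 'n where "a \<noteq> b"
    by (auto simp: card_2_iff)
  obtain H where "is_hyperplane H" "\<forall>x\<in>slab_points a b s. infdist x H \<le> sqrt 2 * s / real m"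
    using slab_points_near_hyperplane[OF \<open>a \<noteq> b\<close> _ assms(1), of s] assms(2,3) by auto
  moreover have "3/2 * 2^m * ((s - 1) / (s + 2 * sqrt (real m))) \<le> real (card (slab_points a b s))"
    using binomial_sum_centred_window_ge[of s m] card_slab_points_ge[OF \<open>a \<noteq> b\<close> assms(1), of s]
      assms(2,3) by linarith
  ultimately show ?thesis
    using slab_points_subset_sign_cube slab_points_not_in_hyperplane[OF \<open>a \<noteq> b\<close> assms(2)] by blast
qed

lemma slab_size_arith:
  fixes \<epsilon> r t :: real
  assumes "8 < \<epsilon> * r" "\<epsilon> \<le> 1" "0 \<le> t" "t \<le> r"
  shows "\<epsilon> / 8 * 2 ^ (m + 2) \<le> 3/2 * 2^m * ((4/3 * \<epsilon> * r - 1) / (4/3 * \<epsilon> * r + 2 * t))"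
proof -
  have "0 < r"
    using assms by (cases "r = 0") auto
  then have "0 < \<epsilon>"
    using assms(1) zero_less_mult_pos2[of \<epsilon> r] by simp
  then have "\<epsilon> * (4/3 * \<epsilon> * r) \<le> 4/3 * \<epsilon> * r" "\<epsilon> * t \<le> \<epsilon> * r"
    using assms \<open>0 < r\<close> by (simp_all add: mult_left_mono mult_le_cancel_right1)
  then have "\<epsilon> / 2 * (4/3 * \<epsilon> * r + 2 * t) \<le> 3/2 * (4/3 * \<epsilon> * r - 1)"
    using assms(1) by (simp add: algebra_simps)
  moreover have "0 < 4/3 * \<epsilon> * r + 2 * t"
    using \<open>0 < \<epsilon>\<close> \<open>0 < r\<close> assms(3) by (intro add_pos_nonneg) simp_all
  ultimately have "\<epsilon> / 2 \<le> 3/2 * (4/3 * \<epsilon> * r - 1) / (4/3 * \<epsilon> * r + 2 * t)"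
    by (simp only: pos_le_divide_eq)
  then have "\<epsilon> / 2 \<le> 3/2 * ((4/3 * \<epsilon> * r - 1) / (4/3 * \<epsilon> * r + 2 * t))"
    by simp
  then have "2^m * (\<epsilon> / 2) \<le> 2^m * (3/2 * ((4/3 * \<epsilon> * r - 1) / (4/3 * \<epsilon> * r + 2 * t)))"
    by (rule mult_left_mono) simp
  then show ?thesis
    by (simp only: power_add ac_simps) simp
qed

lemma slab_width_arith:
  fixes \<epsilon> r :: real
  assumes "0 < \<epsilon>" "0 < r" "36 \<le> r^2"
  shows "sqrt 2 * (4/3 * \<epsilon> * r) / (r^2 - 2) \<le> 2 * \<epsilon> / r"
proof -
  have "sqrt 2 \<le> 17/12"
    by (rule real_le_lsqrt) (simp_all add: power2_eq_square)
  then have "sqrt 2 * (4/3 * r^2) \<le> 17/12 * (4/3 * r^2)"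
    by (rule mult_right_mono) simp
  also have "\<dots> \<le> 2 * (r^2 - 2)"
    using assms(3) by simp
  finally have "\<epsilon> * (sqrt 2 * (4/3 * r^2)) \<le> \<epsilon> * (2 * (r^2 - 2))"
    using assms(1) by (simp add: mult_left_mono)
  moreover have "0 < r^2 - 2"
    using assms(3) by simp
  ultimately show ?thesis
    using assms(2) by (simp add: field_simps power2_eq_square)
qed

theorem lemma40:
  fixes \<epsilon> :: real
  assumes "\<epsilon> > 8 / sqrt (real CARD('n))"
    and "\<epsilon> \<le> 1"
  shows "\<exists>(H :: (real ^ 'n) set) S. is_hyperplane H \<and> S \<subseteq> sign_cube \<and>
           real (card S) \<ge> \<epsilon> / 8 * 2 ^ CARD('n) \<and>
           (\<forall>x\<in>S. infdist x H \<le> 2 * \<epsilon> / sqrt (real CARD('n))) \<and>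
           \<not> (\<exists>H'. is_hyperplane H' \<and> S \<subseteq> H')"
proof -
  define r where "r = sqrt (real CARD('n))"
  define m where "m = CARD('n) - 2"
  define s where "s = 4/3 * \<epsilon> * r"
  have "0 < r" "8 < \<epsilon> * r" "\<epsilon> * r \<le> r"
    using assms by (simp_all add: r_def divide_less_eq mult.commute mult_le_cancel_left1)
  then have "0 < \<epsilon>" "8 < r" "8 * r < r^2"
    using zero_less_mult_pos2[of \<epsilon> r] by (simp_all add: power2_eq_square)
  then have "CARD('n) = m + 2" "r^2 = real m + 2" "sqrt (real m) \<le> r"
    by (simp_all add: r_def m_def of_nat_diff)
  moreover have "s = 4/3 * (\<epsilon> * r)"
    by (simp add: s_def)
  ultimately have "3 \<le> s" "s \<le> real m"
    using \<open>8 < \<epsilon> * r\<close> \<open>\<epsilon> * r \<le> r\<close> \<open>8 < r\<close> \<open>8 * r < r^2\<close> by linarith+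
  have "\<epsilon> / 8 * 2 ^ CARD('n) \<le> 3/2 * 2^m * ((s - 1) / (s + 2 * sqrt (real m)))"
    using slab_size_arith[OF \<open>8 < \<epsilon> * r\<close> assms(2) _ \<open>sqrt (real m) \<le> r\<close>]
    unfolding \<open>CARD('n) = m + 2\<close> s_def by simp
  moreover have "sqrt 2 * s / real m \<le> 2 * \<epsilon> / sqrt (real CARD('n))"
    using slab_width_arith[OF \<open>0 < \<epsilon>\<close> \<open>0 < r\<close>] \<open>8 * r < r^2\<close> \<open>8 < r\<close> \<open>r^2 = real m + 2\<close>
    by (simp add: s_def flip: r_def)
  ultimately show ?thesis
    using exists_slab_point_set[OF \<open>CARD('n) = m + 2\<close> \<open>3 \<le> s\<close> \<open>s \<le> real m\<close>]
    by (meson order.trans)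
qed

end
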